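(* For all positive integers $n$ and $q$, let $Q := 2q+1$. Then $$f(n,q) \leq {}^{n-1}Q := Q^{Q^{\cdot^{\cdot^{\cdot^{Q}}}}},$$ where $Q$ occurs $n-1$ times in the exponential tower (with the convention that the tower of height $0$ equals $1$).
   Context: A $q$-ary word is a finite string of characters over an alphabet of $q$ letters; the empty word is $\varepsilon$ and words form a semigroup under concatenation. $V$ is a subword of $W$ if $W = UVU'$ for some (possibly empty) words $U,U'$. A word $W$ is an instance of a word $V = x_0x_1\cdots x_{m-1}$ (each $x_i$ a letter) if $W = A_0A_1\cdots A_{m-1}$ with each $A_i$ nonempty and $A_i = A_j$ whenever $x_i = x_j$ (equivalently, $W=\phi(V)$ for a semigroup homomorphism $\phi$ sending letters to nonempty words). A word $U$ encounters $V$ if some subword of $U$ is an instance of $V$; otherwise $U$ avoids $V$. The Zimin words are defined by $Z_0 := \varepsilon$ and $Z_{n+1} := Z_n x_n Z_n$ for distinct letters $x_0,x_1,\dots$ (so $Z_1 = a$, $Z_2 = aba$, $Z_3 = abacaba$, ...). For positive integers $n,q$, $f(n,q)$ denotes the smallest integer $M$ such that every $q$-ary word of length $M$ encounters $Z_n$. *)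

theory Defs
  imports Main
begin

definition qary_word :: "nat \<Rightarrow> nat list \<Rightarrow> bool" where
  "qary_word q w \<longleftrightarrow> set w \<subseteq> {..<q}"

definition instance_of :: "'b list \<Rightarrow> 'a list \<Rightarrow> bool" where
  "instance_of W V \<longleftrightarrow>
     (\<exists>\<phi> :: 'a \<Rightarrow> 'b list. (\<forall>x\<in>set V. \<phi> x \<noteq> []) \<and> W = concat (map \<phi> V))"

definition encounters :: "'b list \<Rightarrow> 'a list \<Rightarrow> bool" where
  "encounters U V \<longleftrightarrow> (\<exists>A S B. U = A @ S @ B \<and> instance_of S V)"

text \<open>Zimin words with distinct letters x_i = i.\<close>
fun zimin :: "nat \<Rightarrow> nat list" where
  "zimin 0 = []"
| "zimin (Suc n) = zimin n @ [n] @ zimin n"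

definition f :: "nat \<Rightarrow> nat \<Rightarrow> nat" where
  "f n q = (LEAST M. \<forall>w. qary_word q w \<and> length w = M \<longrightarrow> encounters w (zimin n))"

fun tower :: "nat \<Rightarrow> nat \<Rightarrow> nat" where
  "tower Q 0 = 1"
| "tower Q (Suc k) = Q ^ tower Q k"

end

theory Submission
  imports Defs
begin

text \<open>
  If every q-ary word of length M encounters Z_n, then a q-ary word of
  length (2q+1)^M \<ge> (M+1) q^M + M contains q^M + 1 blocks of length M, consecutive ones
  separated by a letter. Only q^M q-ary words have length M, so two blocks coincide and the
  word has a factor U C U with length U = M and C nonempty. By induction U = A S B with S
  an instance of Z_n, and then S (B C A) S is an instance of Z_(n+1) = Z_n x_n Z_n.
\<close>

lemma set_zimin: "set (zimin n) = {..<n}"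
  by (induction n) (auto simp: lessThan_Suc)

lemma encounters_append:
  assumes "encounters U V"
  shows "encounters (X @ U @ Y) V"
proof -
  obtain A S B where "U = A @ S @ B" "instance_of S V"
    using assms unfolding encounters_def by blast
  then have "X @ U @ Y = (X @ A) @ S @ (B @ Y) \<and> instance_of S V"
    by simp
  then show ?thesis
    unfolding encounters_def by blast
qed

lemma encounters_zimin_Suc:
  assumes "encounters U (zimin n)" "C \<noteq> []"
  shows "encounters (U @ C @ U) (zimin (Suc n))"
proof -
  obtain A S B where U: "U = A @ S @ B" and "instance_of S (zimin n)"
    using assms(1) unfolding encounters_def by blast
  then obtain \<phi> :: "nat \<Rightarrow> 'a list" where ne: "\<forall>x\<in>set (zimin n). \<phi> x \<noteq> []"
    and S: "S = concat (map \<phi> (zimin n))"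
    unfolding instance_of_def by blast
  define \<psi> where "\<psi> = \<phi>(n := B @ C @ A)"
  have "concat (map \<psi> (zimin n)) = S"
    unfolding S by (rule arg_cong[where f = concat], rule map_cong) (auto simp: \<psi>_def set_zimin)
  moreover have "\<psi> n = B @ C @ A"
    by (simp add: \<psi>_def)
  ultimately have "S @ (B @ C @ A) @ S = concat (map \<psi> (zimin (Suc n)))"
    by (simp add: S)
  moreover have "\<forall>x\<in>set (zimin (Suc n)). \<psi> x \<noteq> []"
    using ne assms(2) by (auto simp: \<psi>_def set_zimin)
  ultimately have "instance_of (S @ (B @ C @ A) @ S) (zimin (Suc n))"
    unfolding instance_of_def by blast
  moreover have "U @ C @ U = A @ (S @ (B @ C @ A) @ S) @ B"
    by (simp add: U)
  ultimately show ?thesis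
    unfolding encounters_def by blast
qed

lemma split_two_factors:
  assumes "a + M < b" "b + M \<le> length w"
  shows "\<exists>X C Y. w = X @ take M (drop a w) @ C @ take M (drop b w) @ Y \<and> C \<noteq> []"
proof -
  define C where "C = take (b - (a + M)) (drop (a + M) w)"
  have "drop a w = take M (drop a w) @ drop (a + M) w"
    by (metis append_take_drop_id drop_drop add.commute)
  moreover have "drop (a + M) w = C @ drop b w"
    using assms(1) unfolding C_def by (metis append_take_drop_id drop_drop le_add_diff_inverse2 less_imp_le)
  moreover have "drop b w = take M (drop b w) @ drop (b + M) w"
    by (metis append_take_drop_id drop_drop add.commute)
  ultimately have "w = take a w @ take M (drop a w) @ C @ take M (drop b w) @ drop (b + M) w"
    by (metis append_take_drop_id)
  moreover have "C \<noteq> []"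
    using assms unfolding C_def by simp
  ultimately show ?thesis
    by blast
qed

lemma blocks_length_le_power:
  fixes q M :: nat
  assumes "q \<ge> 1"
  shows "(M + 1) * q ^ M + M \<le> (2 * q + 1) ^ M"
proof (induction M)
  case 0
  then show ?case by simp
next
  case (Suc M)
  have "1 \<le> (M + 1) * q ^ M"
    using assms by (simp add: Suc_le_eq)
  then have "(Suc M + 1) * q ^ Suc M + Suc M \<le> (2 * q + 1) * ((M + 1) * q ^ M + M)"
    by (simp add: algebra_simps)
  also have "\<dots> \<le> (2 * q + 1) * (2 * q + 1) ^ M"
    using Suc.IH by (rule mult_le_mono2)
  finally show ?case by simp
qed

lemma qary_word_repeated_factor:
  assumes "qary_word q w" "q \<ge> 1" "length w \<ge> (2 * q + 1) ^ M"
  shows "\<exists>X U C Y. w = X @ U @ C @ U @ Y \<and> length U = M \<and> C \<noteq> []"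
proof -
  define K where "K = q ^ M"
  define block where "block i = take M (drop (i * (M + 1)) w)" for i
  define words where "words = {xs :: nat list. set xs \<subseteq> {..<q} \<and> length xs = M}"
  have len: "K * (M + 1) + M \<le> length w"
    using blocks_length_le_power[OF assms(2), of M] assms(3) by (simp add: K_def mult.commute)
  have block_end: "i * (M + 1) + M \<le> length w" if "i \<le> K" for i
    using len mult_le_mono1[OF that, of "M + 1"] by linarith
  have length_block: "length (block i) = M" if "i \<le> K" for i
    using block_end[OF that] by (simp add: block_def)
  have "block ` {0..K} \<subseteq> words"
    using assms(1) length_block
    by (auto simp: block_def words_def qary_word_def dest: in_set_takeD in_set_dropD)
  then have "card (block ` {0..K}) \<le> K"
    using card_mono[of words] finite_lists_length_eq[of "{..<q}" M]
      card_lists_length_eq[of "{..<q}" M]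
    by (simp add: words_def K_def)
  then have "\<not> inj_on block {0..K}"
    by (intro pigeonhole) simp
  then obtain a b where ab: "a < b" "b \<le> K" "block a = block b"
    unfolding inj_on_def by (metis atLeastAtMost_iff linorder_neqE_nat)
  have "a * (M + 1) + M < b * (M + 1)"
    using mult_le_mono1[of "Suc a" b "M + 1"] ab(1) by simp
  then obtain X C Y where "w = X @ block a @ C @ block b @ Y" "C \<noteq> []"
    using split_two_factors[of _ M _ w] block_end[OF ab(2)] unfolding block_def by blast
  moreover have "length (block a) = M"
    using length_block ab by simp
  ultimately show ?thesis
    using ab(3) by metis
qed

lemma encounters_zimin_if_length_ge_tower:
  assumes "qary_word q w" "q \<ge> 1" "length w \<ge> tower (2 * q + 1) m"
  shows "encounters w (zimin (Suc m))"
  using assms(1,3)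
proof (induction m arbitrary: w)
  case 0
  then have "instance_of w (zimin 1)"
    unfolding instance_of_def by (intro exI[of _ "\<lambda>_. w"]) auto
  then show ?case
    unfolding encounters_def by (metis append.left_neutral append.right_neutral One_nat_def)
next
  case (Suc m)
  then obtain X U C Y where w: "w = X @ U @ C @ U @ Y"
    and "length U = tower (2 * q + 1) m" "C \<noteq> []"
    using qary_word_repeated_factor[OF Suc.prems(1) assms(2), of "tower (2 * q + 1) m"] Suc.prems(2)
    by auto
  moreover have "qary_word q U"
    using Suc.prems(1) w by (auto simp: qary_word_def)
  ultimately have "encounters U (zimin (Suc m))"
    using Suc.IH by simp
  then have "encounters (X @ (U @ C @ U) @ Y) (zimin (Suc (Suc m)))"
    using encounters_zimin_Suc encounters_append \<open>C \<noteq> []\<close> by blast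
  then show ?case
    by (simp add: w)
qed

theorem mainTheorem1:
  fixes n q :: nat
  assumes "n \<ge> 1" and "q \<ge> 1"
  shows "f n q \<le> tower (2 * q + 1) (n - 1)"
  unfolding f_def
proof (rule Least_le, intro allI impI)
  fix w
  assume "qary_word q w \<and> length w = tower (2 * q + 1) (n - 1)"
  then have "encounters w (zimin (Suc (n - 1)))"
    by (intro encounters_zimin_if_length_ge_tower[OF _ assms(2)]) simp_all
  then show "encounters w (zimin n)"
    using assms(1) by (simp del: zimin.simps)
qed

end
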